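(* Let $m\ge1$, let $\mathcal{X},\mathcal{A}_1,\dots,\mathcal{A}_m$ be finite sets with $|\mathcal{X}|=d\ge2$, and let $P$ be a probability distribution on $\mathcal{X}\times\mathcal{A}_1\times\cdots\times\mathcal{A}_m$ such that $\omega_{\mathrm{c}}<\omega_{\mathrm{ns}}$. Then there is a no-signalling correlation $Q$ which is a vertex of the no-signalling polytope, which attains $\omega_{\mathrm{ns}}$, and for which there exist $x\in\mathcal{X}$ and $a_1\in\mathcal{A}_1,\dots,a_m\in\mathcal{A}_m$ with $Q(x,\dots,x|a_1,\dots,a_m)>1/d$.
   Context: $\delta$ is the indicator function. An $m$-partite no-signalling correlation is a conditional distribution $Q(x_1,\dots,x_m|a_1,\dots,a_m)$ on $\mathcal{X}^m$ given $(a_1,\dots,a_m)\in\mathcal{A}_1\times\cdots\times\mathcal{A}_m$ such that for every index set $I\subset\{1,\dots,m\}$ with complement $J$, $\sum_{x_J}Q(x_I,x_J|a_I,a_J)$ does not depend on $a_J$; the set of all such $Q$ is a convex polytope (the no-signalling polytope). $\omega_{\mathrm{ns}}=\max_Q\sum_{x,a_1,\dots,a_m}P(x,a_1,\dots,a_m)Q(x,\dots,x|a_1,\dots,a_m)$ over no-signalling $Q$, and $\omega_{\mathrm{c}}=\max_{f_1,\dots,f_m}\sum P(x,a_1,\dots,a_m)\delta[f_1(a_1)=\cdots=f_m(a_m)=x]$ over functions $f_i\colon\mathcal{A}_i\to\mathcal{X}$. *)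

theory Defs
  imports "HOL-Analysis.Analysis"
begin

text \<open>A correlation is Q : (nat => 'x) => (nat => 'a) => real,
 Q xs a = Q(xs|a).\<close>

definition questions :: "nat \<Rightarrow> (nat \<Rightarrow> 'a set) \<Rightarrow> (nat \<Rightarrow> 'a) set" where
  "questions m A = PiE {0..<m} A"

definition answers :: "nat \<Rightarrow> 'x set \<Rightarrow> (nat \<Rightarrow> 'x) set" where
  "answers m X = PiE {0..<m} (\<lambda>_. X)"

definition diag :: "nat \<Rightarrow> 'x \<Rightarrow> (nat \<Rightarrow> 'x)" where
  "diag m x = (\<lambda>i\<in>{0..<m}. x)"

definition no_signalling ::
  "nat \<Rightarrow> 'x set \<Rightarrow> (nat \<Rightarrow> 'a set) \<Rightarrow> ((nat \<Rightarrow> 'x) \<Rightarrow> (nat \<Rightarrow> 'a) \<Rightarrow> real) set" where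
  "no_signalling m X A = {Q.
     (\<forall>xs a. (xs \<notin> answers m X \<or> a \<notin> questions m A) \<longrightarrow> Q xs a = 0) \<and>
     (\<forall>a\<in>questions m A. (\<forall>xs\<in>answers m X. Q xs a \<ge> 0) \<and> (\<Sum>xs\<in>answers m X. Q xs a) = 1) \<and>
     (\<forall>I. I \<subseteq> {0..<m} \<longrightarrow>
        (\<forall>a\<in>questions m A. \<forall>a'\<in>questions m A. (\<forall>i\<in>I. a i = a' i) \<longrightarrow>
          (\<forall>xs\<in>answers m X.
             (\<Sum>ys\<in>{ys\<in>answers m X. \<forall>i\<in>I. ys i = xs i}. Q ys a)
           = (\<Sum>ys\<in>{ys\<in>answers m X. \<forall>i\<in>I. ys i = xs i}. Q ys a'))))}"

definition is_vertex :: "('b \<Rightarrow> 'c \<Rightarrow> real) \<Rightarrow> ('b \<Rightarrow> 'c \<Rightarrow> real) set \<Rightarrow> bool" where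
  "is_vertex Q S \<longleftrightarrow> Q \<in> S \<and>
     (\<forall>Q1\<in>S. \<forall>Q2\<in>S. \<forall>t::real. 0 < t \<and> t < 1 \<and> Q = (\<lambda>u v. t * Q1 u v + (1 - t) * Q2 u v)
        \<longrightarrow> Q1 = Q2)"

definition win_ns ::
  "nat \<Rightarrow> 'x set \<Rightarrow> (nat \<Rightarrow> 'a set) \<Rightarrow> ('x \<Rightarrow> (nat \<Rightarrow> 'a) \<Rightarrow> real)
     \<Rightarrow> ((nat \<Rightarrow> 'x) \<Rightarrow> (nat \<Rightarrow> 'a) \<Rightarrow> real) \<Rightarrow> real" where
  "win_ns m X A P Q = (\<Sum>x\<in>X. \<Sum>a\<in>questions m A. P x a * Q (diag m x) a)"

definition omega_ns :: "nat \<Rightarrow> 'x set \<Rightarrow> (nat \<Rightarrow> 'a set) \<Rightarrow> ('x \<Rightarrow> (nat \<Rightarrow> 'a) \<Rightarrow> real) \<Rightarrow> real" where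
  "omega_ns m X A P = (SUP Q\<in>no_signalling m X A. win_ns m X A P Q)"

definition win_c ::
  "nat \<Rightarrow> 'x set \<Rightarrow> (nat \<Rightarrow> 'a set) \<Rightarrow> ('x \<Rightarrow> (nat \<Rightarrow> 'a) \<Rightarrow> real)
     \<Rightarrow> (nat \<Rightarrow> 'a \<Rightarrow> 'x) \<Rightarrow> real" where
  "win_c m X A P f = (\<Sum>x\<in>X. \<Sum>a\<in>questions m A. P x a * (if \<forall>i<m. f i (a i) = x then 1 else 0))"

definition omega_c :: "nat \<Rightarrow> 'x set \<Rightarrow> (nat \<Rightarrow> 'a set) \<Rightarrow> ('x \<Rightarrow> (nat \<Rightarrow> 'a) \<Rightarrow> real) \<Rightarrow> real" where
  "omega_c m X A P = (SUP f\<in>{f. \<forall>i<m. f i \<in> A i \<rightarrow> X}. win_c m X A P f)"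

definition prob_dist :: "nat \<Rightarrow> 'x set \<Rightarrow> (nat \<Rightarrow> 'a set) \<Rightarrow> ('x \<Rightarrow> (nat \<Rightarrow> 'a) \<Rightarrow> real) \<Rightarrow> bool" where
  "prob_dist m X A P \<longleftrightarrow> (\<forall>x\<in>X. \<forall>a\<in>questions m A. P x a \<ge> 0) \<and>
     (\<Sum>x\<in>X. \<Sum>a\<in>questions m A. P x a) = 1"

end

theory Submission
  imports Defs
begin

(* A linear objective on the no-signalling polytope attains its maximum at a vertex. A point Q
   that is not a vertex is a proper convex combination of two distinct correlations, both
   vanishing wherever Q does; moving Q along their difference in the direction that does not
   decrease the objective, until one more coordinate hits 0, strictly shrinks the support. A
   vertex is determined by its support, so there are finitely many vertices and the best one is
   optimal. On the classical side, the constant strategy "everybody answers x" wins with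
   probability sum_a P(x,a); these d numbers sum to 1, so omega_c >= 1/d. Hence an optimal
   vertex with all Q(x,...,x|a) <= 1/d would give omega_ns <= 1/d <= omega_c. *)

lemma sum_add_scaled_diff:
  fixes f g h :: "'a \<Rightarrow> real"
  shows "(\<Sum>y\<in>S. f y + s * (g y - h y)) = sum f S + s * (sum g S - sum h S)"
  by (simp add: sum.distrib sum_subtractf sum_distrib_left right_diff_distrib)

lemma small_perturbation_nonneg:
  fixes g h :: "'a \<Rightarrow> real"
  assumes "finite S" and "\<And>x. x \<in> S \<Longrightarrow> 0 \<le> g x"
    and "\<And>x. x \<in> S \<Longrightarrow> g x = 0 \<Longrightarrow> h x = 0"
  shows "\<exists>e>0. \<forall>x\<in>S. e * \<bar>h x\<bar> \<le> g x"
proof -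
  have "\<forall>\<^sub>F e in at_right 0. e * \<bar>h x\<bar> \<le> g x" if "x \<in> S" for x
  proof (cases "g x = 0")
    case True
    then show ?thesis using assms(3) that by simp
  next
    case False
    have "((\<lambda>e. e * \<bar>h x\<bar>) \<longlongrightarrow> 0 * \<bar>h x\<bar>) (at_right 0)"
      by (intro tendsto_intros)
    moreover have "0 * \<bar>h x\<bar> < g x" using False assms(2)[OF that] by simp
    ultimately have "\<forall>\<^sub>F e in at_right 0. e * \<bar>h x\<bar> < g x" by (rule order_tendstoD)
    then show ?thesis by eventually_elim simp
  qed
  then have "\<forall>\<^sub>F e in at_right (0::real). 0 < e \<and> (\<forall>x\<in>S. e * \<bar>h x\<bar> \<le> g x)"
    using assms(1) eventually_at_right_less by (auto simp: eventually_ball_finite_distrib eventually_conj_iff)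
  then show ?thesis using eventually_happens'[OF trivial_limit_at_right_real] by blast
qed

lemma ratio_test:
  fixes q r :: "'a \<Rightarrow> real"
  assumes "finite S" and "\<And>x. x \<in> S \<Longrightarrow> 0 \<le> q x" and "x0 \<in> S" and "r x0 < 0"
  obtains s x where "0 \<le> s" and "\<And>y. y \<in> S \<Longrightarrow> 0 \<le> q y + s * r y"
    and "x \<in> S" and "r x < 0" and "q x + s * r x = 0"
proof -
  define N where "N = {x \<in> S. r x < 0}"
  define t where "t = (\<lambda>x. - r x)"
  have N: "finite N" "N \<noteq> {}" using assms(1,3,4) by (auto simp: N_def)
  define s where "s = Min ((\<lambda>x. q x / t x) ` N)"
  have "s \<in> (\<lambda>x. q x / t x) ` N" unfolding s_def using N by (intro Min_in) auto
  then obtain x where x: "x \<in> S" "r x < 0" "s = q x / t x" by (auto simp: N_def)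
  have "0 \<le> s" unfolding x(3) using x assms(2) by (intro divide_nonneg_pos) (auto simp: t_def)
  moreover have "0 \<le> q y + s * r y" if "y \<in> S" for y
  proof (cases "r y < 0")
    case True
    then have "s \<le> q y / t y" using N that by (auto simp: s_def N_def)
    moreover have "0 < t y" using True by (simp add: t_def)
    ultimately have "s * t y \<le> q y" by (simp add: pos_le_divide_eq)
    then show ?thesis by (simp add: t_def)
  next
    case False
    then show ?thesis using \<open>0 \<le> s\<close> assms(2)[OF that] by simp
  qed
  moreover have "q x + s * r x = 0" using x by (simp add: t_def)
  ultimately show thesis using that x by blast
qed

lemma is_vertexD:
  assumes "is_vertex V S" and "Q1 \<in> S" "Q2 \<in> S" and "0 < t" "t < 1"
    and "V = (\<lambda>u v. t * Q1 u v + (1 - t) * Q2 u v)"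
  shows "Q1 = Q2"
  using assms unfolding is_vertex_def by blast

definition affine_functional :: "(('b \<Rightarrow> 'c \<Rightarrow> real) \<Rightarrow> real) \<Rightarrow> bool" where
  "affine_functional f \<longleftrightarrow>
     (\<forall>Q Q1 Q2 s. f (\<lambda>u v. Q u v + s * (Q1 u v - Q2 u v)) = f Q + s * (f Q1 - f Q2))"

text \<open>K is the part of an affine subspace that lies in the nonnegative orthant over the finite
  coordinate set D (this is what closure under lines staying nonnegative expresses);
  incomparability is what a normalisation constraint such as a sum equal to 1 provides.\<close>
locale nonneg_polytope =
  fixes D :: "('b \<times> 'c) set" and K :: "('b \<Rightarrow> 'c \<Rightarrow> real) set"
  assumes finite_D: "finite D"
    and vanish_outside: "Q \<in> K \<Longrightarrow> (u, v) \<notin> D \<Longrightarrow> Q u v = 0"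
    and nonneg: "Q \<in> K \<Longrightarrow> 0 \<le> Q u v"
    and line_closed: "\<lbrakk>Q \<in> K; Q1 \<in> K; Q2 \<in> K;
        \<And>u v. (u, v) \<in> D \<Longrightarrow> 0 \<le> Q u v + s * (Q1 u v - Q2 u v)\<rbrakk>
      \<Longrightarrow> (\<lambda>u v. Q u v + s * (Q1 u v - Q2 u v)) \<in> K"
    and incomparable: "\<lbrakk>Q1 \<in> K; Q2 \<in> K; Q1 \<noteq> Q2\<rbrakk> \<Longrightarrow> \<exists>(u, v)\<in>D. Q1 u v < Q2 u v"
begin

abbreviation support :: "('b \<Rightarrow> 'c \<Rightarrow> real) \<Rightarrow> ('b \<times> 'c) set" where
  "support Q \<equiv> support_on D (case_prod Q)"

lemma support_subsetI:
  assumes "\<And>u v. Q u v = 0 \<Longrightarrow> R u v = 0"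
  shows "support R \<subseteq> support Q"
proof
  fix x
  assume "x \<in> support R"
  then show "x \<in> support Q" using assms by (cases x) (auto simp: in_support_on)
qed

lemma zero_if_support_subset:
  assumes "R \<in> K" and "support R \<subseteq> support Q" and "Q u v = 0"
  shows "R u v = 0"
proof (rule ccontr)
  assume "R u v \<noteq> 0"
  moreover have "(u, v) \<in> D" using calculation vanish_outside[OF assms(1)] by blast
  ultimately have "(u, v) \<in> support R" by (simp add: in_support_on)
  with assms(2,3) show False by (auto simp: in_support_on)
qed

lemma non_vertex_decomposition:
  assumes "Q \<in> K" and "\<not> is_vertex Q K"
  obtains Q1 Q2 where "Q1 \<in> K" "Q2 \<in> K" "Q1 \<noteq> Q2"
    and "support Q1 \<subseteq> support Q" "support Q2 \<subseteq> support Q"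
proof -
  obtain Q1 Q2 t where Q12: "Q1 \<in> K" "Q2 \<in> K" "Q1 \<noteq> Q2" and t: "0 < t" "t < 1"
    and Q: "Q = (\<lambda>u v. t * Q1 u v + (1 - t) * Q2 u v)"
    using assms unfolding is_vertex_def by blast
  have "Q1 u v = 0 \<and> Q2 u v = 0" if "Q u v = 0" for u v
  proof -
    have "0 \<le> t * Q1 u v" "0 \<le> (1 - t) * Q2 u v"
      using t nonneg[OF Q12(1)] nonneg[OF Q12(2)] by simp_all
    then have "t * Q1 u v = 0 \<and> (1 - t) * Q2 u v = 0"
      using that Q by (simp add: add_nonneg_eq_0_iff)
    then show ?thesis using t by simp
  qed
  then show thesis using that[OF Q12] support_subsetI by metis
qed

lemma support_reduction:
  assumes f: "affine_functional f" and Q: "Q \<in> K" "\<not> is_vertex Q K"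
  obtains R where "R \<in> K" "f Q \<le> f R" "support R \<subset> support Q"
proof -
  obtain B1 B2 where B: "B1 \<in> K" "B2 \<in> K" "B1 \<noteq> B2"
    and supp_B: "support B1 \<subseteq> support Q" "support B2 \<subseteq> support Q" and "f B2 \<le> f B1"
  proof -
    obtain Q1 Q2 where "Q1 \<in> K" "Q2 \<in> K" "Q1 \<noteq> Q2"
      "support Q1 \<subseteq> support Q" "support Q2 \<subseteq> support Q"
      using non_vertex_decomposition[OF Q] .
    then show thesis
      using that[of Q1 Q2] that[of Q2 Q1] by (cases "f Q2 \<le> f Q1") auto
  qed
  let ?r = "\<lambda>(u, v). B1 u v - B2 u v"
  obtain u v where uv: "(u, v) \<in> D" "?r (u, v) < 0" using incomparable[OF B] by auto
  have "0 \<le> case_prod Q y" for y using nonneg[OF Q(1)] by (simp add: case_prod_beta)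
  then obtain s x where "0 \<le> s"
    and R_nonneg: "\<And>y. y \<in> D \<Longrightarrow> 0 \<le> case_prod Q y + s * ?r y"
    and x: "x \<in> D" "?r x < 0" "case_prod Q x + s * ?r x = 0"
    using ratio_test[where S = D and q = "case_prod Q" and r = ?r, OF finite_D _ uv] by blast
  define R where "R = (\<lambda>u v. Q u v + s * (B1 u v - B2 u v))"
  have "R \<in> K" unfolding R_def using R_nonneg by (intro line_closed Q(1) B(1,2)) fastforce
  moreover have "f Q \<le> f R"
    using f \<open>0 \<le> s\<close> \<open>f B2 \<le> f B1\<close> by (simp add: R_def affine_functional_def)
  moreover have "support R \<subseteq> support Q"
    using zero_if_support_subset[OF B(1) supp_B(1)] zero_if_support_subset[OF B(2) supp_B(2)]
    by (intro support_subsetI) (simp add: R_def)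
  moreover have "x \<in> support Q - support R"
  proof -
    obtain u v where uv: "x = (u, v)" by fastforce
    have "0 < B2 u v" using x uv nonneg[OF B(1), of u v] by simp
    then have "x \<in> support B2" using x(1) uv by (simp add: support_on_def)
    moreover have "R u v = 0" using x uv by (simp add: R_def)
    ultimately show ?thesis using supp_B(2) uv by (auto simp: support_on_def)
  qed
  ultimately show thesis using that by blast
qed

lemma exists_vertex_ge:
  assumes f: "affine_functional f"
  shows "Q \<in> K \<Longrightarrow> \<exists>V. is_vertex V K \<and> f Q \<le> f V"
proof (induction "card (support Q)" arbitrary: Q rule: less_induct)
  case less
  show ?case
  proof (cases "is_vertex Q K")
    case True
    then show ?thesis by auto
  next
    case False
    then obtain R where R: "R \<in> K" "f Q \<le> f R" "support R \<subset> support Q"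
      using support_reduction[OF f less.prems] by blast
    then have "card (support R) < card (support Q)"
      using finite_D by (intro psubset_card_mono) auto
    then obtain V where "is_vertex V K" "f R \<le> f V" using less.hyps R(1) by blast
    then show ?thesis using R(2) by force
  qed
qed

lemma vertex_eq_if_support_subset:
  assumes V: "is_vertex V K" and W: "W \<in> K" "support W \<subseteq> support V"
  shows "W = V"
proof -
  have "V \<in> K" using V by (simp add: is_vertex_def)
  obtain e where "0 < e" and e: "\<forall>(u, v)\<in>D. e * \<bar>V u v - W u v\<bar> \<le> V u v"
    using small_perturbation_nonneg[OF finite_D, of "case_prod V" "\<lambda>(u, v). V u v - W u v"]
      nonneg[OF \<open>V \<in> K\<close>] zero_if_support_subset[OF W] by fastforce
  have nonneg_pm: "0 \<le> V u v + e * (V u v - W u v)" "0 \<le> V u v + (- e) * (V u v - W u v)"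
    if "(u, v) \<in> D" for u v
  proof -
    have "\<bar>e * (V u v - W u v)\<bar> \<le> V u v" using e that \<open>0 < e\<close> by (auto simp: abs_mult)
    then show "0 \<le> V u v + e * (V u v - W u v)" "0 \<le> V u v + (- e) * (V u v - W u v)"
      by (auto simp: abs_le_iff)
  qed
  define Vp where "Vp = (\<lambda>u v. V u v + e * (V u v - W u v))"
  define Vm where "Vm = (\<lambda>u v. V u v + (- e) * (V u v - W u v))"
  have "Vp \<in> K" unfolding Vp_def
    by (rule line_closed[OF \<open>V \<in> K\<close> \<open>V \<in> K\<close> W(1) nonneg_pm(1)])
  moreover have "Vm \<in> K" unfolding Vm_def
    by (rule line_closed[OF \<open>V \<in> K\<close> \<open>V \<in> K\<close> W(1) nonneg_pm(2)])
  moreover have V_mid: "V = (\<lambda>u v. 1/2 * Vp u v + (1 - 1/2) * Vm u v)"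
    unfolding Vp_def Vm_def by (intro ext) (simp add: algebra_simps)
  ultimately have "Vp = Vm" using is_vertexD[OF V _ _ _ _ V_mid] by simp
  then have "e * (V u v - W u v) = 0" for u v
    unfolding Vp_def Vm_def by (drule_tac x = u in fun_cong, drule_tac x = v in fun_cong) simp
  then show ?thesis using \<open>0 < e\<close> by (auto simp: fun_eq_iff)
qed

lemma finite_vertices: "finite {V. is_vertex V K}"
proof -
  have "inj_on support {V. is_vertex V K}"
    by (intro inj_onI) (metis is_vertex_def mem_Collect_eq order_refl vertex_eq_if_support_subset)
  moreover have "support ` {V. is_vertex V K} \<subseteq> Pow D" by (auto simp: support_on_def)
  ultimately show ?thesis
    using finite_D by (meson finite_Pow_iff finite_imageD finite_subset)
qed

lemma exists_optimal_vertex: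
  assumes f: "affine_functional f" and "K \<noteq> {}"
  obtains V where "is_vertex V K" "(SUP Q\<in>K. f Q) = f V"
proof -
  let ?Vs = "{V. is_vertex V K}"
  have "?Vs \<noteq> {}" using assms(2) exists_vertex_ge[OF f] by blast
  then have "Max (f ` ?Vs) \<in> f ` ?Vs" using finite_vertices by (intro Max_in) auto
  then obtain V where V: "is_vertex V K" "f V = Max (f ` ?Vs)" by auto
  have "f Q \<le> f V" if "Q \<in> K" for Q
    using exists_vertex_ge[OF f that] V(2) finite_vertices by (force intro: order_trans)
  moreover have "V \<in> K" using V(1) by (simp add: is_vertex_def)
  ultimately have "(SUP Q\<in>K. f Q) = f V" by (intro cSup_eq_maximum) auto
  then show thesis using that V(1) by blast
qed

end

lemma finite_answers: "finite X \<Longrightarrow> finite (answers m X)"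
  by (simp add: answers_def finite_PiE)

lemma finite_questions: "\<forall>i<m. finite (A i) \<Longrightarrow> finite (questions m A)"
  by (auto simp: questions_def intro!: finite_PiE)

lemma no_signalling_vanish:
  "Q \<in> no_signalling m X A \<Longrightarrow> xs \<notin> answers m X \<or> a \<notin> questions m A \<Longrightarrow> Q xs a = 0"
  unfolding no_signalling_def by blast

lemma no_signalling_nonneg:
  assumes "Q \<in> no_signalling m X A"
  shows "0 \<le> Q xs a"
proof (cases "xs \<in> answers m X \<and> a \<in> questions m A")
  case True
  then show ?thesis using assms unfolding no_signalling_def by blast
next
  case False
  then show ?thesis using no_signalling_vanish[OF assms] by simp
qed

lemma no_signalling_normalised:
  "Q \<in> no_signalling m X A \<Longrightarrow> a \<in> questions m A \<Longrightarrow> (\<Sum>xs\<in>answers m X. Q xs a) = 1"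
  unfolding no_signalling_def by blast

lemma no_signalling_marginal:
  assumes "Q \<in> no_signalling m X A" and "I \<subseteq> {0..<m}"
    and "a \<in> questions m A" "a' \<in> questions m A" "\<forall>i\<in>I. a i = a' i" and "xs \<in> answers m X"
  shows "(\<Sum>ys\<in>{ys\<in>answers m X. \<forall>i\<in>I. ys i = xs i}. Q ys a)
       = (\<Sum>ys\<in>{ys\<in>answers m X. \<forall>i\<in>I. ys i = xs i}. Q ys a')"
  using assms unfolding no_signalling_def by blast

lemma no_signalling_line_closed:
  assumes Q: "Q \<in> no_signalling m X A" "Q1 \<in> no_signalling m X A" "Q2 \<in> no_signalling m X A"
    and "\<And>xs a. xs \<in> answers m X \<Longrightarrow> a \<in> questions m A \<Longrightarrow>
      0 \<le> Q xs a + s * (Q1 xs a - Q2 xs a)"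
  shows "(\<lambda>xs a. Q xs a + s * (Q1 xs a - Q2 xs a)) \<in> no_signalling m X A"
    (is "?R \<in> _")
proof -
  have "?R xs a = 0" if "xs \<notin> answers m X \<or> a \<notin> questions m A" for xs a
    using no_signalling_vanish[OF Q(1) that] no_signalling_vanish[OF Q(2) that]
      no_signalling_vanish[OF Q(3) that] by simp
  moreover have "(\<Sum>xs\<in>answers m X. ?R xs a) = 1" if "a \<in> questions m A" for a
    using no_signalling_normalised[OF Q(1) that] no_signalling_normalised[OF Q(2) that]
      no_signalling_normalised[OF Q(3) that] by (simp add: sum_add_scaled_diff)
  moreover have "(\<Sum>ys\<in>{ys\<in>answers m X. \<forall>i\<in>I. ys i = xs i}. ?R ys a)
      = (\<Sum>ys\<in>{ys\<in>answers m X. \<forall>i\<in>I. ys i = xs i}. ?R ys a')"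
    if "I \<subseteq> {0..<m}" "a \<in> questions m A" "a' \<in> questions m A" "\<forall>i\<in>I. a i = a' i"
      "xs \<in> answers m X" for I a a' xs
    using no_signalling_marginal[OF Q(1) that] no_signalling_marginal[OF Q(2) that]
      no_signalling_marginal[OF Q(3) that]
    by (simp only: sum_add_scaled_diff)
  ultimately show ?thesis using assms(4) unfolding no_signalling_def by blast
qed

lemma no_signalling_incomparable:
  assumes "finite X" and Q: "Q1 \<in> no_signalling m X A" "Q2 \<in> no_signalling m X A" "Q1 \<noteq> Q2"
  shows "\<exists>xs\<in>answers m X. \<exists>a\<in>questions m A. Q1 xs a < Q2 xs a"
proof (rule ccontr)
  assume "\<not> ?thesis"
  then have ge: "Q2 xs a \<le> Q1 xs a" if "xs \<in> answers m X" "a \<in> questions m A" for xs a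
    using that by force
  obtain xs a where ne: "Q1 xs a \<noteq> Q2 xs a" using Q(3) by fast
  have "xs \<in> answers m X \<and> a \<in> questions m A"
  proof (rule ccontr)
    assume "\<not> ?thesis"
    then have "Q1 xs a = 0" "Q2 xs a = 0"
      using no_signalling_vanish[OF Q(1)] no_signalling_vanish[OF Q(2)] by auto
    with ne show False by simp
  qed
  then have xs: "xs \<in> answers m X" and a: "a \<in> questions m A" by auto
  have "(\<Sum>ys\<in>answers m X. Q2 ys a) < (\<Sum>ys\<in>answers m X. Q1 ys a)"
    using ge[OF _ a] ge[OF xs a] not_sym[OF ne] xs
    by (intro sum_strict_mono_ex1 finite_answers[OF assms(1)]) (auto simp: less_le)
  then show False using no_signalling_normalised[OF Q(1) a] no_signalling_normalised[OF Q(2) a] by simp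
qed

lemma nonneg_polytope_no_signalling:
  assumes "finite X" and "\<forall>i<m. finite (A i)"
  shows "nonneg_polytope (answers m X \<times> questions m A) (no_signalling m X A)"
proof unfold_locales
  show "finite (answers m X \<times> questions m A)"
    using assms by (simp add: finite_answers finite_questions)
next
  fix Q u v
  assume "Q \<in> no_signalling m X A" and "(u, v) \<notin> answers m X \<times> questions m A"
  then show "Q u v = 0" by (simp add: no_signalling_vanish)
next
  fix Q u v
  assume "Q \<in> no_signalling m X A"
  then show "0 \<le> Q u v" by (rule no_signalling_nonneg)
next
  fix Q Q1 Q2 s
  assume "Q \<in> no_signalling m X A" "Q1 \<in> no_signalling m X A" "Q2 \<in> no_signalling m X A"
    and "\<And>u v. (u, v) \<in> answers m X \<times> questions m A \<Longrightarrow>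
      0 \<le> Q u v + s * (Q1 u v - Q2 u v)"
  then show "(\<lambda>u v. Q u v + s * (Q1 u v - Q2 u v)) \<in> no_signalling m X A"
    by (intro no_signalling_line_closed) simp_all
next
  fix Q1 Q2
  assume "Q1 \<in> no_signalling m X A" "Q2 \<in> no_signalling m X A" "Q1 \<noteq> Q2"
  then obtain xs a where "xs \<in> answers m X" "a \<in> questions m A" "Q1 xs a < Q2 xs a"
    using no_signalling_incomparable[OF assms(1)] by blast
  then show "\<exists>(u, v)\<in>answers m X \<times> questions m A. Q1 u v < Q2 u v"
    by (intro bexI[of _ "(xs, a)"]) simp_all
qed

lemma affine_functional_win_ns: "affine_functional (win_ns m X A P)"
  unfolding affine_functional_def win_ns_def
  by (simp add: distrib_left right_diff_distrib sum.distrib sum_subtractf sum_distrib_left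
      mult.left_commute)

lemma constant_answer_no_signalling:
  assumes "x \<in> X" and "finite X"
  shows "(\<lambda>xs a. if xs = diag m x \<and> a \<in> questions m A then 1 else 0) \<in> no_signalling m X A"
    (is "?Q \<in> _")
proof -
  have diag: "diag m x \<in> answers m X" using assms(1) by (auto simp: diag_def answers_def)
  have "?Q xs a = 0" if "xs \<notin> answers m X \<or> a \<notin> questions m A" for xs a
    using that diag by auto
  moreover have "(\<Sum>xs\<in>answers m X. ?Q xs a) = 1" if "a \<in> questions m A" for a
    using that diag finite_answers[OF assms(2)] by simp
  moreover have "(\<Sum>ys\<in>T. ?Q ys a) = (\<Sum>ys\<in>T. ?Q ys a')"
    if "a \<in> questions m A" "a' \<in> questions m A" for a a' T
    using that by simp
  ultimately show ?thesis unfolding no_signalling_def by auto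
qed

lemma win_ns_le_if_diag_le:
  assumes "prob_dist m X A P"
    and "\<And>x a. x \<in> X \<Longrightarrow> a \<in> questions m A \<Longrightarrow> Q (diag m x) a \<le> c"
  shows "win_ns m X A P Q \<le> c"
proof -
  have "win_ns m X A P Q \<le> (\<Sum>x\<in>X. \<Sum>a\<in>questions m A. P x a * c)"
    unfolding win_ns_def using assms by (intro sum_mono mult_left_mono) (auto simp: prob_dist_def)
  also have "\<dots> = c" using assms(1) by (simp add: prob_dist_def flip: sum_distrib_right)
  finally show ?thesis .
qed

lemma win_c_le_one:
  assumes "prob_dist m X A P"
  shows "win_c m X A P f \<le> 1"
proof -
  have "win_c m X A P f \<le> (\<Sum>x\<in>X. \<Sum>a\<in>questions m A. P x a)"
    unfolding win_c_def using assms by (intro sum_mono) (auto simp: prob_dist_def)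
  then show ?thesis using assms by (simp add: prob_dist_def)
qed

lemma win_c_constant:
  assumes "m \<ge> 1" and "finite X" and "x \<in> X"
  shows "win_c m X A P (\<lambda>_ _. x) = (\<Sum>a\<in>questions m A. P x a)"
proof -
  have "\<exists>i. i < m" using assms(1) by (intro exI[of _ 0]) simp
  then have "win_c m X A P (\<lambda>_ _. x) = (\<Sum>y\<in>X. if x = y then \<Sum>a\<in>questions m A. P y a else 0)"
    unfolding win_c_def by (intro sum.cong refl) auto
  also have "\<dots> = (\<Sum>a\<in>questions m A. P x a)" using assms(2,3) by simp
  finally show ?thesis .
qed

lemma omega_c_ge_inverse_card:
  assumes "m \<ge> 1" and "finite X" and P: "prob_dist m X A P"
  shows "1 / real (card X) \<le> omega_c m X A P"
proof -
  have bdd: "bdd_above (win_c m X A P ` {f. \<forall>i<m. f i \<in> A i \<rightarrow> X})"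
    using win_c_le_one[OF P] by (intro bdd_aboveI2[where M = 1])
  have marginal_le: "(\<Sum>a\<in>questions m A. P x a) \<le> omega_c m X A P" if "x \<in> X" for x
  proof -
    have "(\<lambda>_ _. x) \<in> {f. \<forall>i<m. f i \<in> A i \<rightarrow> X}" using that by simp
    then have "win_c m X A P (\<lambda>_ _. x) \<le> omega_c m X A P"
      unfolding omega_c_def using bdd by (rule cSUP_upper)
    then show ?thesis using win_c_constant[OF assms(1,2) that, where A = A and P = P] by simp
  qed
  have "1 = (\<Sum>x\<in>X. \<Sum>a\<in>questions m A. P x a)" using P by (simp add: prob_dist_def)
  also have "\<dots> \<le> (\<Sum>x\<in>X. omega_c m X A P)" using marginal_le by (rule sum_mono)
  also have "\<dots> = real (card X) * omega_c m X A P" by simp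
  finally have "1 \<le> real (card X) * omega_c m X A P" .
  moreover have "X \<noteq> {}" using P by (auto simp: prob_dist_def)
  ultimately show ?thesis using assms(2) by (simp add: divide_le_eq mult.commute card_gt_0_iff)
qed

theorem mainTheorem10:
  fixes m :: nat and X :: "'x set" and A :: "nat \<Rightarrow> 'a set" and d :: nat
    and P :: "'x \<Rightarrow> (nat \<Rightarrow> 'a) \<Rightarrow> real"
  assumes "m \<ge> 1"
    and "finite X" and "\<forall>i<m. finite (A i)"
    and "card X = d" and "d \<ge> 2"
    and "prob_dist m X A P"
    and "omega_c m X A P < omega_ns m X A P"
  shows "\<exists>Q. is_vertex Q (no_signalling m X A) \<and> win_ns m X A P Q = omega_ns m X A P \<and>
           (\<exists>x\<in>X. \<exists>a\<in>questions m A. Q (diag m x) a > 1 / real d)"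
proof -
  interpret nonneg_polytope "answers m X \<times> questions m A" "no_signalling m X A"
    using nonneg_polytope_no_signalling assms(2,3) .
  obtain x0 where "x0 \<in> X" using assms(4,5) by fastforce
  from constant_answer_no_signalling[OF this assms(2)]
  have "no_signalling m X A \<noteq> {}" by blast
  then obtain V where V: "is_vertex V (no_signalling m X A)"
    and "(SUP Q\<in>no_signalling m X A. win_ns m X A P Q) = win_ns m X A P V"
    by (rule exists_optimal_vertex[OF affine_functional_win_ns])
  then have opt: "omega_ns m X A P = win_ns m X A P V" by (simp add: omega_ns_def)
  have "\<exists>x\<in>X. \<exists>a\<in>questions m A. V (diag m x) a > 1 / real d"
  proof (rule ccontr)
    assume "\<not> ?thesis"
    then have "win_ns m X A P V \<le> 1 / real d"
      using win_ns_le_if_diag_le[OF assms(6)] by (meson not_less)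
    also have "\<dots> \<le> omega_c m X A P"
      using omega_c_ge_inverse_card[OF assms(1,2,6)] assms(4) by simp
    finally show False using assms(7) opt by simp
  qed
  with V opt show ?thesis by auto
qed

end
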